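(* Let $r\geq 2$ and $d\geq 2$ be integers and let $\mathbf a=(a_1,\ldots,a_r)$ be a sequence of positive integers. For an integer $n\geq 0$ let $\mathbf p_{\mathbf a,d}(n)$ denote the number of integer tuples $(x_1,\ldots,x_r)$ with $\sum_{i=1}^r a_ix_i=n$, $x_i\geq 0$ and $x_i\equiv 0$ or $x_i\equiv 1\pmod d$ for all $i$. Write $d\mathbf a=(da_1,\ldots,da_r)$, $[r]=\{1,\ldots,r\}$, and for $J\subseteq[r]$ let $a_J=\sum_{i\in J}a_i$ (so $a_\emptyset=0$). Then for all $n\geq 0$, $$\mathbf p_{\mathbf a,d}(n)=\sum_{J\subseteq[r]}p_{d\mathbf a}(n-a_J),$$ and the polynomial part of $\mathbf p_{\mathbf a,d}$ satisfies $$P_{\mathbf a,d}(n)=\sum_{J\subseteq[r]}P_{d\mathbf a}(n-a_J).$$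
   Context: For a sequence $\mathbf b=(b_1,\ldots,b_r)$ of positive integers and an integer $m$, $p_{\mathbf b}(m)$ is the number of integer tuples $(y_1,\ldots,y_r)$ with $y_i\geq 0$ and $\sum_i b_iy_i=m$ (so $p_{\mathbf b}(m)=0$ for $m<0$). The polynomial part $P_{\mathbf b}(m)$ of $p_{\mathbf b}$ is the polynomial in $m$ given by the coefficient of $t^{-1}$ in the Laurent expansion at $t=0$ of $\dfrac{e^{mt}}{\prod_{i=1}^r(1-e^{-b_it})}$ (Sylvester's first wave). The polynomial part $P_{\mathbf a,d}(n)$ of $\mathbf p_{\mathbf a,d}$ is the coefficient of $t^{-1}$ in the Laurent expansion at $t=0$ of $e^{nt}\prod_{i=1}^r\dfrac{1+e^{-a_it}}{1-e^{-da_it}}$. *)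

theory Defs
  imports "HOL-Complex_Analysis.Complex_Analysis"
begin

text \<open>p_b(m): number of (y_1..y_r) >= 0 with sum b_i y_i = m (zero for m < 0).\<close>
definition part_count :: "nat list \<Rightarrow> int \<Rightarrow> nat" where
  "part_count b m = card {y :: nat list. length y = length b \<and>
      int (\<Sum>i<length b. b ! i * y ! i) = m}"

definition part_count_mod :: "nat list \<Rightarrow> nat \<Rightarrow> nat \<Rightarrow> nat" where
  "part_count_mod a d n = card {x :: nat list. length x = length a \<and>
      (\<Sum>i<length a. a ! i * x ! i) = n \<and>
      (\<forall>i<length a. x ! i mod d = 0 \<or> x ! i mod d = 1)}"

definition poly_part :: "nat list \<Rightarrow> complex \<Rightarrow> complex" where
  "poly_part b m = fls_nth (laurent_expansion
      (\<lambda>t. exp (m * t) / (\<Prod>i<length b. (1 - exp (- (of_nat (b ! i)) * t)))) 0) (-1)"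

definition poly_part_mod :: "nat list \<Rightarrow> nat \<Rightarrow> complex \<Rightarrow> complex" where
  "poly_part_mod a d n = fls_nth (laurent_expansion
      (\<lambda>t. exp (n * t) * (\<Prod>i<length a. (1 + exp (- (of_nat (a ! i)) * t))
            / (1 - exp (- (of_nat (d * a ! i)) * t)))) 0) (-1)"

end

theory Submission
  imports Defs
begin

(* A number x \<ge> 0 with x mod d \<in> {0, 1} is uniquely d y + [i \<in> J], where J records the
   coordinates of residue 1 (this needs d \<ge> 2). Hence solutions of \<Sum> a_i x_i = n correspond
   bijectively to pairs (J, y) with \<Sum> d a_i y_i = n - a_J. On the generating-function side the same
   splitting is the expansion \<Prod> (1 + e^(-a_i t)) = \<Sum>_J e^(-a_J t), and taking the coefficient
   of t^(-1) of a Laurent expansion is linear. *)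

lemma finite_weighted_solutions:
  assumes "\<forall>i<length b. b ! i > 0"
  shows "finite {y :: nat list. length y = length b \<and> int (\<Sum>i<length b. b ! i * y ! i) = m}"
proof (rule finite_subset)
  show "finite {y :: nat list. set y \<subseteq> {..nat m} \<and> length y = length b}"
    by (rule finite_lists_length_eq) simp
  have "y ! k \<le> nat m"
    if "length y = length b" "int (\<Sum>i<length b. b ! i * y ! i) = m" "k < length b" for y k
  proof -
    have "y ! k \<le> b ! k * y ! k"
      using assms \<open>k < length b\<close> by (simp add: Suc_le_eq)
    also have "\<dots> \<le> (\<Sum>i<length b. b ! i * y ! i)"
      using \<open>k < length b\<close> by (intro member_le_sum) auto
    finally show ?thesis
      using that(2) by linarith
  qed
  then show "{y. length y = length b \<and> int (\<Sum>i<length b. b ! i * y ! i) = m}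
      \<subseteq> {y. set y \<subseteq> {..nat m} \<and> length y = length b}"
    by (auto simp: in_set_conv_nth)
qed

definition join_digits :: "nat \<Rightarrow> nat set \<Rightarrow> nat list \<Rightarrow> nat list" where
  "join_digits d J y = map (\<lambda>i. d * y ! i + of_bool (i \<in> J)) [0..<length y]"

definition split_digits :: "nat \<Rightarrow> nat list \<Rightarrow> nat set \<times> nat list" where
  "split_digits d x = ({i. i < length x \<and> x ! i mod d = 1}, map (\<lambda>v. v div d) x)"

lemma length_join_digits [simp]: "length (join_digits d J y) = length y"
  by (simp add: join_digits_def)

lemma nth_join_digits [simp]:
  "i < length y \<Longrightarrow> join_digits d J y ! i = d * y ! i + of_bool (i \<in> J)"
  by (simp add: join_digits_def)

lemma nth_join_digits_mod:
  assumes "d \<ge> 2" "i < length y"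
  shows "join_digits d J y ! i mod d = of_bool (i \<in> J)"
  using assms by simp

lemma split_join_digits:
  assumes "d \<ge> 2" "J \<subseteq> {..<length y}"
  shows "split_digits d (join_digits d J y) = (J, y)"
proof -
  have "{i. i < length y \<and> join_digits d J y ! i mod d = 1} = J"
    using assms by (auto simp: nth_join_digits_mod simp del: One_nat_def)
  moreover have "map (\<lambda>v. v div d) (join_digits d J y) = y"
    using assms(1) by (intro nth_equalityI) auto
  ultimately show ?thesis
    by (simp add: split_digits_def)
qed

lemma join_split_digits:
  assumes "\<forall>i<length x. x ! i mod d = 0 \<or> x ! i mod d = 1"
  shows "case_prod (join_digits d) (split_digits d x) = x"
proof (rule nth_equalityI)
  fix i assume "i < length (case_prod (join_digits d) (split_digits d x))"
  then have "i < length x"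
    by (simp add: split_digits_def)
  then have "x ! i mod d = of_bool (x ! i mod d = 1)"
    using assms by auto
  then show "case_prod (join_digits d) (split_digits d x) ! i = x ! i"
    using \<open>i < length x\<close> by (simp add: split_digits_def)
qed (simp add: split_digits_def)

lemma weighted_sum_join_digits:
  assumes "length y = length a" "J \<subseteq> {..<length a}"
  shows "(\<Sum>i<length a. a ! i * join_digits d J y ! i)
     = (\<Sum>i<length a. map (\<lambda>x. d * x) a ! i * y ! i) + (\<Sum>i\<in>J. a ! i)"
proof -
  have "(\<Sum>i<length a. a ! i * join_digits d J y ! i)
      = (\<Sum>i<length a. map (\<lambda>x. d * x) a ! i * y ! i + (if i \<in> J then a ! i else 0))"
    using assms(1) by (intro sum.cong) (auto simp: algebra_simps)
  also have "\<dots> = (\<Sum>i<length a. map (\<lambda>x. d * x) a ! i * y ! i) + (\<Sum>i\<in>J. a ! i)"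
    using assms(2) by (simp add: sum.distrib sum.If_cases Int_absorb1)
  finally show ?thesis .
qed

lemma part_count_mod_eq_sum_part_count:
  assumes "d \<ge> 2" and pos: "\<forall>i<length a. a ! i > 0"
  shows "part_count_mod a d n =
    (\<Sum>J\<in>Pow {..<length a}. part_count (map (\<lambda>x. d * x) a) (int n - int (\<Sum>i\<in>J. a ! i)))"
proof -
  define b where "b = map (\<lambda>x. d * x) a"
  define S where "S = {x :: nat list. length x = length a \<and> (\<Sum>i<length a. a ! i * x ! i) = n \<and>
      (\<forall>i<length a. x ! i mod d = 0 \<or> x ! i mod d = 1)}"
  define T where "T J = {y :: nat list. length y = length b \<and>
      int (\<Sum>i<length b. b ! i * y ! i) = int n - int (\<Sum>i\<in>J. a ! i)}" for J
  have weighted_sum: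
    "(\<Sum>i<length a. a ! i * join_digits d J y ! i) = (\<Sum>i<length b. b ! i * y ! i) + (\<Sum>i\<in>J. a ! i)"
    if "J \<subseteq> {..<length a}" "length y = length a" for J y
    using weighted_sum_join_digits[OF that(2,1)] by (simp add: b_def)
  have "bij_betw (case_prod (join_digits d)) (Sigma (Pow {..<length a}) T) S"
  proof (rule bij_betw_byWitness[where f' = "split_digits d"])
    show "\<forall>p\<in>Sigma (Pow {..<length a}) T. split_digits d (case_prod (join_digits d) p) = p"
      using assms(1) by (auto simp: T_def b_def split_join_digits)
    show "\<forall>x\<in>S. case_prod (join_digits d) (split_digits d x) = x"
      by (auto simp: S_def join_split_digits)
    show "case_prod (join_digits d) ` Sigma (Pow {..<length a}) T \<subseteq> S"
    proof
      fix x assume "x \<in> case_prod (join_digits d) ` Sigma (Pow {..<length a}) T"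
      then obtain J y where x: "x = join_digits d J y" and "J \<in> Pow {..<length a}" "y \<in> T J"
        by auto
      then have J: "J \<subseteq> {..<length a}" and y: "length y = length a"
        and "int (\<Sum>i<length b. b ! i * y ! i) = int n - int (\<Sum>i\<in>J. a ! i)"
        by (auto simp: T_def b_def)
      then have "(\<Sum>i<length a. a ! i * join_digits d J y ! i) = n"
        by (simp only: weighted_sum)
      with J y show "x \<in> S"
        using assms(1) by (simp add: x S_def nth_join_digits_mod)
    qed
    show "split_digits d ` S \<subseteq> Sigma (Pow {..<length a}) T"
    proof
      fix p assume "p \<in> split_digits d ` S"
      then obtain x where "x \<in> S" and p: "p = split_digits d x" ..
      obtain J y where Jy: "split_digits d x = (J, y)"
        by fastforce
      with \<open>x \<in> S\<close> have "J \<subseteq> {..<length a}" "length y = length a" "join_digits d J y = x"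
        using join_split_digits[of x d] by (auto simp: S_def split_digits_def)
      with \<open>x \<in> S\<close> show "p \<in> Sigma (Pow {..<length a}) T"
        using weighted_sum by (auto simp: p Jy S_def T_def b_def)
    qed
  qed
  then have "part_count_mod a d n = card (Sigma (Pow {..<length a}) T)"
    by (simp add: part_count_mod_def S_def bij_betw_same_card)
  also have "\<dots> = (\<Sum>J\<in>Pow {..<length a}. card (T J))"
  proof (rule card_SigmaI)
    have "\<forall>i<length b. b ! i > 0"
      using pos assms(1) by (simp add: b_def)
    then show "\<forall>J\<in>Pow {..<length a}. finite (T J)"
      unfolding T_def by (blast intro: finite_weighted_solutions)
  qed simp
  finally show ?thesis
    by (simp add: part_count_def T_def b_def)
qed

lemma laurent_expansion_sum:
  assumes "\<And>x. x \<in> A \<Longrightarrow> f x meromorphic_on {z}"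
  shows "laurent_expansion (\<lambda>t. \<Sum>x\<in>A. f x t) z = (\<Sum>x\<in>A. laurent_expansion (f x) z)"
  by (intro laurent_expansion_eqI has_laurent_expansion_sum
        meromorphic_on_imp_has_laurent_expansion[OF assms]) auto

lemma prod_one_plus_exp_eq_sum_Pow:
  fixes c :: "'a \<Rightarrow> complex"
  assumes "finite I"
  shows "(\<Prod>i\<in>I. 1 + exp (c i)) = (\<Sum>J\<in>Pow I. exp (\<Sum>i\<in>J. c i))"
proof -
  have "(\<Prod>i\<in>I. exp (c i) + 1) = (\<Sum>J\<in>Pow I. \<Prod>i\<in>J. exp (c i))"
    using assms by (simp add: prod_add)
  also have "\<dots> = (\<Sum>J\<in>Pow I. exp (\<Sum>i\<in>J. c i))"
    using assms by (intro sum.cong refl) (auto simp: exp_sum finite_subset)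
  finally show ?thesis by (simp add: add.commute)
qed

lemma poly_part_mod_eq_sum_poly_part:
  "poly_part_mod a d z =
     (\<Sum>J\<in>Pow {..<length a}. poly_part (map (\<lambda>x. d * x) a) (z - of_nat (\<Sum>i\<in>J. a ! i)))"
proof -
  define D where "D = (\<lambda>t::complex. \<Prod>i<length a. 1 - exp (- of_nat (d * a ! i) * t))"
  define g where "g J = (\<lambda>t. exp ((z - of_nat (\<Sum>i\<in>J. a ! i)) * t) / D t)" for J
  have expand: "(\<lambda>t. exp (z * t) * (\<Prod>i<length a. (1 + exp (- of_nat (a ! i) * t))
          / (1 - exp (- of_nat (d * a ! i) * t)))) = (\<lambda>t. \<Sum>J\<in>Pow {..<length a}. g J t)"
  proof
    fix t
    have "exp (z * t) * (\<Prod>i<length a. 1 + exp (- of_nat (a ! i) * t))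
        = (\<Sum>J\<in>Pow {..<length a}. exp (z * t + (\<Sum>i\<in>J. - of_nat (a ! i) * t)))"
      by (simp add: prod_one_plus_exp_eq_sum_Pow sum_distrib_left exp_add)
    also have "\<dots> = (\<Sum>J\<in>Pow {..<length a}. exp ((z - of_nat (\<Sum>i\<in>J. a ! i)) * t))"
      by (simp add: sum_distrib_left sum_negf algebra_simps)
    finally show "exp (z * t) * (\<Prod>i<length a. (1 + exp (- of_nat (a ! i) * t))
          / (1 - exp (- of_nat (d * a ! i) * t))) = (\<Sum>J\<in>Pow {..<length a}. g J t)"
      by (simp add: prod_dividef g_def D_def sum_divide_distrib)
  qed
  have "g J meromorphic_on {0}" for J
    unfolding g_def D_def by (intro meromorphic_intros analytic_on_imp_meromorphic_on analytic_intros)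
  then have "poly_part_mod a d z = (\<Sum>J\<in>Pow {..<length a}. fls_nth (laurent_expansion (g J) 0) (-1))"
    unfolding poly_part_mod_def expand by (simp add: laurent_expansion_sum fls_nth_sum)
  then show ?thesis
    by (simp add: poly_part_def g_def D_def)
qed

theorem proposition2p2:
  fixes a :: "nat list" and d :: nat
  assumes "length a \<ge> 2" and "d \<ge> 2" and "\<forall>i<length a. a ! i > 0"
  shows "\<forall>n::nat.
      part_count_mod a d n =
        (\<Sum>J\<in>Pow {..<length a}. part_count (map (\<lambda>x. d * x) a) (int n - int (\<Sum>i\<in>J. a ! i)))
    \<and> poly_part_mod a d (of_nat n) =
        (\<Sum>J\<in>Pow {..<length a}. poly_part (map (\<lambda>x. d * x) a) (of_nat n - of_nat (\<Sum>i\<in>J. a ! i)))"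
  using part_count_mod_eq_sum_part_count[OF assms(2,3)] poly_part_mod_eq_sum_poly_part by blast

end
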